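(* Let $m$ and $e$ be positive integers with $e\mid m$. Then the greatest common divisor of the integers $(l-1)\frac{m}{e(l)}$, as $l$ ranges over the primes dividing $e$, divides $(e-1)\frac{m}{e}$.
   Context: For a positive integer $t$ and a prime $l$, $t(l)$ denotes the largest power of $l$ dividing $t$. *)

theory Defs
  imports "HOL-Computational_Algebra.Primes"
begin

text \<open>t(l): the largest power of the prime l dividing the positive integer t.\<close>
definition ppart :: "nat \<Rightarrow> nat \<Rightarrow> nat" where
  "ppart t l = l ^ multiplicity l t"

end

theory Submission
  imports Defs "HOL-Number_Theory.Number_Theory"
begin

text \<open>
  Write \<open>m = c e\<close>; every term carries the factor \<open>c\<close>, so it suffices to treat \<open>m = e\<close>.
  Let \<open>G\<close> be the gcd of the numbers \<open>(l - 1) e/e(l)\<close>. A prime \<open>p\<close> dividing \<open>e\<close> divides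
  neither \<open>p - 1\<close> nor \<open>e/e(p)\<close>, so \<open>G\<close> is coprime to \<open>e\<close>, hence to every \<open>e/e(l)\<close>; therefore
  \<open>G\<close> divides each \<open>l - 1\<close>. Thus all prime factors of \<open>e\<close> are \<open>1\<close> modulo \<open>G\<close>, hence so is
  \<open>e\<close>, i.e. \<open>G\<close> divides \<open>e - 1\<close>.
\<close>

definition ppart_cofactor_terms :: "nat \<Rightarrow> nat \<Rightarrow> nat set" where
  "ppart_cofactor_terms e m = {(l - 1) * (m div ppart e l) | l. prime l \<and> l dvd e}"

lemma ppart_dvd: "ppart t l dvd t"
  unfolding ppart_def by (rule multiplicity_dvd)

lemma prime_not_dvd_div_ppart:
  assumes "prime p" and "t > 0"
  shows "\<not> p dvd t div ppart t p"
  unfolding ppart_def using assms prime_gt_1_nat[OF assms(1)]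
  by (intro multiplicity_decompose) simp_all

lemma cong_1_if_prime_divisors_cong_1:
  fixes n G :: nat
  assumes "n \<noteq> 0" and "\<And>p. prime p \<Longrightarrow> p dvd n \<Longrightarrow> [p = 1] (mod G)"
  shows "[n = 1] (mod G)"
  using assms
proof (induction n rule: prime_divisors_induct)
  case (factor p x)
  then have "[p * x = 1 * 1] (mod G)"
    by (intro cong_mult) (auto intro: dvd_mult2)
  then show ?case by simp
qed simp_all

lemma ppart_cofactor_terms_scale:
  assumes "e dvd m"
  shows "ppart_cofactor_terms e m = (*) (m div e) ` ppart_cofactor_terms e e"
proof -
  define c where "c = m div e"
  have m: "m = c * e" using assms by (simp add: c_def)
  have "(l - 1) * (m div ppart e l) = c * ((l - 1) * (e div ppart e l))" for l
  proof -
    have "m div ppart e l = c * (e div ppart e l)"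
      unfolding m by (rule div_mult_swap[OF ppart_dvd, symmetric])
    then show ?thesis by (simp only: mult.left_commute)
  qed
  then have "(\<lambda>l. (l - 1) * (m div ppart e l)) ` {l. prime l \<and> l dvd e}
      = (\<lambda>l. c * ((l - 1) * (e div ppart e l))) ` {l. prime l \<and> l dvd e}"
    by (intro image_cong refl)
  also have "\<dots> = (*) c ` (\<lambda>l. (l - 1) * (e div ppart e l)) ` {l. prime l \<and> l dvd e}"
    by (simp add: image_image)
  finally show ?thesis
    unfolding ppart_cofactor_terms_def setcompr_eq_image c_def .
qed

lemma coprime_Gcd_ppart_cofactor_terms:
  assumes "e > 0"
  shows "coprime (Gcd (ppart_cofactor_terms e e)) e"
proof (rule coprimeI)
  fix p assume pG: "p dvd Gcd (ppart_cofactor_terms e e)" and pe: "p dvd e"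
  show "is_unit p"
  proof (rule ccontr)
    assume "\<not> is_unit p"
    then obtain q where q: "prime q" "q dvd p"
      using prime_factor_nat[of p] by auto
    have "Gcd (ppart_cofactor_terms e e) dvd (q - 1) * (e div ppart e q)"
      unfolding ppart_cofactor_terms_def using q pe by (intro Gcd_dvd) (blast intro: dvd_trans)
    then have "q dvd (q - 1) * (e div ppart e q)"
      using q(2) pG by (blast intro: dvd_trans)
    moreover have "\<not> q dvd q - 1"
      using prime_gt_1_nat[OF q(1)] by (intro nat_dvd_not_less) auto
    ultimately show False
      using prime_not_dvd_div_ppart[OF q(1) assms] by (simp add: prime_dvd_mult_iff[OF q(1)])
  qed
qed

lemma Gcd_ppart_cofactor_terms_dvd:
  assumes "e > 0"
  shows "Gcd (ppart_cofactor_terms e e) dvd e - 1"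
proof -
  define G where "G = Gcd (ppart_cofactor_terms e e)"
  have "[l = 1] (mod G)" if l: "prime l" "l dvd e" for l
  proof -
    have "coprime G (ppart e l * (e div ppart e l))"
      using coprime_Gcd_ppart_cofactor_terms[OF assms]
      unfolding G_def dvd_mult_div_cancel[OF ppart_dvd] .
    then have "coprime G (e div ppart e l)" by simp
    moreover have "G dvd (l - 1) * (e div ppart e l)"
      unfolding G_def ppart_cofactor_terms_def using l by (intro Gcd_dvd) auto
    ultimately have "G dvd l - 1" by (simp add: coprime_dvd_mult_left_iff)
    then show ?thesis
      using prime_gt_1_nat[OF l(1)] by (simp add: cong_altdef_nat cong_sym_eq)
  qed
  then have "[e = 1] (mod G)"
    using assms by (intro cong_1_if_prime_divisors_cong_1[of e]) auto
  then show ?thesis unfolding G_def by (rule cong_to_1_nat)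
qed

theorem mainTheorem12:
  fixes m e :: nat
  assumes "m > 0" and "e > 0" and "e dvd m"
  shows "Gcd {(l - 1) * (m div ppart e l) | l. prime l \<and> l dvd e} dvd (e - 1) * (m div e)"
proof -
  have "Gcd {(l - 1) * (m div ppart e l) | l. prime l \<and> l dvd e}
      = Gcd ((*) (m div e) ` ppart_cofactor_terms e e)"
    using ppart_cofactor_terms_scale[OF assms(3)] by (simp only: ppart_cofactor_terms_def)
  also have "\<dots> = m div e * Gcd (ppart_cofactor_terms e e)"
    by (simp add: Gcd_mult)
  finally show ?thesis
    using Gcd_ppart_cofactor_terms_dvd[OF assms(2)] by (simp add: mult.commute)
qed

end
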